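(* For every real $x>1$, $$\frac{8\pi(x-1)\Psi(\tfrac12x)\Psi(2x)+2\vartheta_2(0,2ix)^2}{\vartheta_3(\tfrac\pi2,\tfrac i2x)^2}<\frac{2\vartheta_2(0,2i)^2}{\vartheta_3(\tfrac\pi2,\tfrac i2)^2}=1,$$ where $\Psi(y)=\sum_{k=1}^\infty k\,e^{-\pi yk^2}$ for $y>0$.
   Context: For $z,t\in\mathbb C$ with $\operatorname{Im}t>0$: $\vartheta_2(z,t)=\sum_{n\in\mathbb Z}e^{\pi i t(n+\frac12)^2}e^{2iz(n+\frac12)}$ and $\vartheta_3(z,t)=\sum_{n\in\mathbb Z}e^{\pi i t n^2}e^{2izn}$. *)

theory Defs
  imports "HOL-Analysis.Analysis"
begin

definition theta2 :: "complex \<Rightarrow> complex \<Rightarrow> complex" where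
  "theta2 z t = (\<Sum>\<^sub>\<infinity>n::int. exp (pi * \<i> * t * (of_int n + 1/2)^2) * exp (2 * \<i> * z * (of_int n + 1/2)))"

definition theta3 :: "complex \<Rightarrow> complex \<Rightarrow> complex" where
  "theta3 z t = (\<Sum>\<^sub>\<infinity>n::int. exp (pi * \<i> * t * (of_int n)^2) * exp (2 * \<i> * z * of_int n))"

definition Psi :: "real \<Rightarrow> real" where
  "Psi y = (\<Sum>k. real (Suc k) * exp (- pi * y * (real (Suc k))^2))"

end

theory Submission
  imports Defs "HOL-Probability.Characteristic_Functions"
begin

lemma integral_mult_cos_power_mult_cos_eq_0:
  fixes \<phi> :: "real \<Rightarrow> real"
  assumes cont: "continuous_on {0..1/2} \<phi>"
    and orth: "\<And>m::nat. integral {0..1/2} (\<lambda>a. \<phi> a * cos (2 * pi * m * a)) = 0"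
  shows "integral {0..1/2} (\<lambda>a. \<phi> a * cos (2 * pi * a) ^ k * cos (2 * pi * of_int m * a)) = 0"
proof (induction k arbitrary: m)
  case 0
  have "cos (2 * pi * of_int m * a) = cos (2 * pi * real (nat \<bar>m\<bar>) * a)" for a
  proof (cases "m \<ge> 0")
    case False
    then have "real (nat \<bar>m\<bar>) = - of_int m"
      by simp
    then show ?thesis
      by (metis cos_minus minus_mult_left mult_minus_right)
  qed simp
  then show ?case
    using orth[of "nat \<bar>m\<bar>"] by simp
next
  case (Suc k)
  have split: "\<phi> a * cos (2 * pi * a) ^ Suc k * cos (2 * pi * of_int m * a) =
      \<phi> a * cos (2 * pi * a) ^ k * cos (2 * pi * of_int (m - 1) * a) / 2 +
      \<phi> a * cos (2 * pi * a) ^ k * cos (2 * pi * of_int (m + 1) * a) / 2" for a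
  proof -
    have product: "cos (2 * pi * a) * cos (2 * pi * of_int m * a) =
        (cos (2 * pi * of_int (m - 1) * a) + cos (2 * pi * of_int (m + 1) * a)) / 2"
      by (simp add: cos_add cos_diff algebra_simps)
    have "\<phi> a * cos (2 * pi * a) ^ Suc k * cos (2 * pi * of_int m * a) =
        \<phi> a * cos (2 * pi * a) ^ k * (cos (2 * pi * a) * cos (2 * pi * of_int m * a))"
      by (simp only: power_Suc mult_ac)
    then show ?thesis
      unfolding product by (simp only: add_divide_distrib distrib_left times_divide_eq_right)
  qed
  have int: "(\<lambda>a. \<phi> a * cos (2 * pi * a) ^ k * cos (2 * pi * of_int j * a)) integrable_on {0..1/2}" for j
    by (intro integrable_continuous_interval continuous_intros cont)
  show ?case
    unfolding split using Suc.IH[of "m - 1"] Suc.IH[of "m + 1"] int[of "m - 1"] int[of "m + 1"]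
    by (simp add: integral_add integrable_on_divide)
qed

lemma integral_mult_poly_cos_eq_0:
  fixes \<phi> :: "real \<Rightarrow> real"
  assumes cont: "continuous_on {0..1/2} \<phi>"
    and orth: "\<And>m::nat. integral {0..1/2} (\<lambda>a. \<phi> a * cos (2 * pi * m * a)) = 0"
    and p: "real_polynomial_function p"
  shows "integral {0..1/2} (\<lambda>a. \<phi> a * p (cos (2 * pi * a))) = 0"
proof -
  obtain c n where p_eq: "p = (\<lambda>x. \<Sum>i\<le>n. c i * x^i)"
    using p real_polynomial_function_iff_sum by blast
  have "integral {0..1/2} (\<lambda>a. \<phi> a * p (cos (2 * pi * a))) =
        (\<Sum>i\<le>n. integral {0..1/2} (\<lambda>a. c i * (\<phi> a * cos (2 * pi * a) ^ i)))"
    unfolding p_eq sum_distrib_left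
    by (subst integral_sum [symmetric])
       (auto intro!: integrable_continuous_interval continuous_intros cont integral_cong simp: algebra_simps)
  also have "\<dots> = 0"
    using integral_mult_cos_power_mult_cos_eq_0[OF cont orth, of _ 0] by simp
  finally show ?thesis .
qed

lemma cos_orthogonal_imp_zero:
  fixes \<phi> :: "real \<Rightarrow> real"
  assumes cont: "continuous_on {0..1/2} \<phi>"
    and orth: "\<And>m::nat. integral {0..1/2} (\<lambda>a. \<phi> a * cos (2 * pi * m * a)) = 0"
    and x: "x \<in> {0..1/2}"
  shows "\<phi> x = 0"
proof -
  have arccos_in: "arccos u / (2 * pi) \<in> {0..1/2}" if "u \<in> {-1..1}" for u
    using that arccos_lbound[of u] arccos_ubound[of u] by (auto simp: field_simps)
  define \<psi> where "\<psi> u = \<phi> (arccos u / (2 * pi))" for u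
  have \<psi>_cont: "continuous_on {-1..1} \<psi>"
    unfolding \<psi>_def
    by (intro continuous_on_compose2[OF cont] continuous_intros continuous_on_arccos')
       (use arccos_in in auto)
  have \<psi>_cos: "\<psi> (cos (2 * pi * a)) = \<phi> a" if "a \<in> {0..1/2}" for a
    using that by (simp add: \<psi>_def arccos_cos)
  obtain M where "M > 0" and M: "\<And>a. a \<in> {0..1/2} \<Longrightarrow> \<bar>\<phi> a\<bar> \<le> M"
    using compact_imp_bounded[OF compact_continuous_image[OF cont]]
    by (auto simp: bounded_pos)
  have int_sq: "(\<lambda>a. \<phi> a ^ 2) integrable_on {0..1/2}"
    by (intro integrable_continuous_interval continuous_intros cont)
  have "integral {0..1/2} (\<lambda>a. \<phi> a ^ 2) \<le> e" if "e > 0" for e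
  proof -
    \<comment> \<open>\<phi> is orthogonal to every polynomial in cos (2 pi a), and these approximate \<phi> uniformly\<close>
    obtain p where p: "real_polynomial_function p"
      and p_approx: "\<And>u. u \<in> {-1..1} \<Longrightarrow> \<bar>\<psi> u - p u\<bar> < e / M"
      using Stone_Weierstrass_real_polynomial_function[OF _ \<psi>_cont, of "e / M"] \<open>M > 0\<close> \<open>e > 0\<close>
      by auto
    have p_cont: "continuous_on {0..1/2} (\<lambda>a. p (cos (2 * pi * a)))"
      by (intro continuous_on_compose2[OF continuous_at_imp_continuous_on[OF ballI[OF continuous_real_polymonial_function[OF p]]]] continuous_intros) auto
    have "integral {0..1/2} (\<lambda>a. \<phi> a ^ 2) =
          integral {0..1/2} (\<lambda>a. \<phi> a * (\<phi> a - p (cos (2 * pi * a))) + \<phi> a * p (cos (2 * pi * a)))"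
      by (rule integral_cong) (simp add: power2_eq_square algebra_simps)
    also have "\<dots> = integral {0..1/2} (\<lambda>a. \<phi> a * (\<phi> a - p (cos (2 * pi * a))))"
      using integral_mult_poly_cos_eq_0[OF cont orth p]
      by (subst integral_add) (auto intro!: integrable_continuous_interval continuous_intros cont p_cont)
    also have "\<dots> \<le> integral {0..1/2::real} (\<lambda>a. M * (e / M))"
    proof (rule integral_le)
      fix a :: real assume a: "a \<in> {0..1/2}"
      have "\<bar>\<phi> a - p (cos (2 * pi * a))\<bar> \<le> e / M"
        using p_approx[of "cos (2 * pi * a)"] \<psi>_cos[OF a] by fastforce
      then have "\<bar>\<phi> a\<bar> * \<bar>\<phi> a - p (cos (2 * pi * a))\<bar> \<le> M * (e / M)"
        using M[OF a] by (intro mult_mono) auto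
      then show "\<phi> a * (\<phi> a - p (cos (2 * pi * a))) \<le> M * (e / M)"
        by (metis abs_ge_self abs_mult order_trans)
    qed (auto intro!: integrable_continuous_interval continuous_intros cont p_cont)
    also have "\<dots> \<le> e"
      using \<open>M > 0\<close> \<open>e > 0\<close> by simp
    finally show ?thesis .
  qed
  then have "integral {0..1/2} (\<lambda>a. \<phi> a ^ 2) \<le> 0"
    by (metis add_0 field_le_epsilon)
  moreover have "integral {0..1/2} (\<lambda>a. \<phi> a ^ 2) \<ge> 0"
    by (intro integral_nonneg int_sq) auto
  ultimately have "((\<lambda>a. \<phi> a ^ 2) has_integral 0) (cbox 0 (1/2))"
    using integrable_integral[OF int_sq] by simp
  then have "\<phi> x ^ 2 = 0"
    by (rule has_integral_0_cbox_imp_0[rotated 2]) (use x cont in \<open>auto intro!: continuous_intros\<close>)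
  then show ?thesis by simp
qed

lemma cos_2pi_mult_add_nat: "cos (2 * pi * real m * (real k + x)) = cos (2 * pi * real m * x)"
  using cos.plus_of_nat[of "2 * pi * real m * x" "m * k"] by (simp add: algebra_simps)

lemma cos_2pi_mult_diff_nat: "cos (2 * pi * real m * (real k - x)) = cos (2 * pi * real m * x)"
  using cos.plus_of_nat[of "- (2 * pi * real m * x)" "m * k"] by (simp add: algebra_simps)

lemma std_normal_cos_integral:
  "integrable lborel (\<lambda>x. std_normal_density x * cos (s * x))"
  "(\<integral>x. std_normal_density x * cos (s * x) \<partial>lborel) = exp (- (s^2) / 2)"
proof -
  have iexp_int: "integrable lborel (\<lambda>x. std_normal_density x *\<^sub>R iexp (s * x))"
    by (rule Bochner_Integration.integrable_bound[of _ std_normal_density]) (auto simp: norm_exp)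
  show int: "integrable lborel (\<lambda>x. std_normal_density x * cos (s * x))"
    by (rule Bochner_Integration.integrable_bound[of _ std_normal_density])
       (auto simp: abs_mult intro!: mult_left_le)
  have "(\<integral>x. std_normal_density x *\<^sub>R iexp (s * x) \<partial>lborel) = exp (- (s^2) / 2)"
    using char_std_normal_distribution unfolding char_def
    by (subst (asm) integral_density) (auto simp: fun_eq_iff)
  then have "(\<integral>x. Re (std_normal_density x *\<^sub>R iexp (s * x)) \<partial>lborel) = exp (- (s^2) / 2)"
    by (metis Re_complex_of_real integral_Re[OF iexp_int])
  then show "(\<integral>x. std_normal_density x * cos (s * x) \<partial>lborel) = exp (- (s^2) / 2)"
    by (simp add: Re_exp)
qed

definition gaussian_cos :: "real \<Rightarrow> real \<Rightarrow> real \<Rightarrow> real" where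
  "gaussian_cos t m b = exp (- pi * t * b^2) * cos (2 * pi * m * b)"

lemma continuous_on_gaussian_cos: "continuous_on S (gaussian_cos t m)"
  unfolding gaussian_cos_def by (intro continuous_intros)

lemma gaussian_cos_integral:
  assumes t: "t > 0"
  shows "integrable lborel (gaussian_cos t m)"
    and "integral\<^sup>L lborel (gaussian_cos t m) = exp (- pi * m^2 / t) / sqrt t"
proof -
  define c where "c = sqrt (2 * pi * t)"
  have c: "c > 0" "c^2 = 2 * pi * t" using t by (simp_all add: c_def)
  define s where "s = 2 * pi * m / c"
  let ?F = "\<lambda>x. std_normal_density x * cos (s * x)"
  have F_scaled: "?F (0 + c * b) = gaussian_cos t m b / sqrt (2 * pi)" for b
  proof -
    have "- ((c * b)^2) / 2 = - pi * t * b^2"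
      using c by (simp add: power_mult_distrib)
    then have density: "std_normal_density (c * b) = exp (- pi * t * b^2) / sqrt (2 * pi)"
      unfolding std_normal_density_def by simp
    have freq: "s * (c * b) = 2 * pi * m * b"
      using c by (simp add: s_def)
    show ?thesis
      by (simp only: add_0_left density freq) (simp add: gaussian_cos_def)
  qed
  have "integrable lborel (\<lambda>b. ?F (0 + c * b))"
    using std_normal_cos_integral(1)[of s] c by (intro lborel_integrable_real_affine) auto
  then show "integrable lborel (gaussian_cos t m)"
    unfolding F_scaled divide_inverse by simp
  have "exp (- (s^2) / 2) = c * integral\<^sup>L lborel (\<lambda>b. ?F (0 + c * b))"
    using std_normal_cos_integral(2)[of s] lborel_integral_real_affine[of c ?F 0] c by simp
  also have "\<dots> = c / sqrt (2 * pi) * integral\<^sup>L lborel (gaussian_cos t m)"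
    unfolding F_scaled by simp
  also have "c / sqrt (2 * pi) = sqrt t"
    using t by (simp add: c_def real_sqrt_mult)
  also have "- (s^2) / 2 = - pi * m^2 / t"
    using t c by (simp add: s_def power_divide power_mult_distrib field_simps power2_eq_square)
  finally show "integral\<^sup>L lborel (gaussian_cos t m) = exp (- pi * m^2 / t) / sqrt t"
    using t by (simp add: field_simps)
qed

lemma gaussian_cos_has_integral_nonneg:
  assumes t: "t > 0"
  shows "(gaussian_cos t m has_integral exp (- pi * m^2 / t) / sqrt t / 2) {0..}"
proof -
  let ?g = "gaussian_cos t m"
  have set_int: "set_integrable lborel A ?g" if "A \<in> sets lborel" for A
    unfolding set_integrable_def
    using that gaussian_cos_integral(1)[OF t] by (intro integrable_mult_indicator) auto
  have nonneg: "?g integrable_on {0..}" "(LBINT x:{0..}. ?g x) = integral {0..} ?g"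
    using set_borel_integral_eq_integral[OF set_int[of "{0..}"]] by auto
  have nonpos: "?g integrable_on {..0}" "(LBINT x:{..0}. ?g x) = integral {..0} ?g"
    using set_borel_integral_eq_integral[OF set_int[of "{..0}"]] by auto
  have "(LBINT x:{..0}. ?g x) = (LBINT x:{x. - x \<in> {..0::real}}. ?g (- x))"
    by (rule set_integral_reflect)
  also have "{x. - x \<in> {..0::real}} = {0..}"
    by auto
  finally have "integral {..0} ?g = integral {0..} ?g"
    using nonneg nonpos by (simp add: gaussian_cos_def)
  moreover have "(?g has_integral integral {..0} ?g + integral {0..} ?g) ({..0} \<union> {0..})"
    by (rule has_integral_Un)
       (use nonneg nonpos in \<open>auto intro: integrable_integral negligible_subset[of "{0}"]\<close>)
  moreover have "{..0::real} \<union> {0..} = UNIV"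
    by auto
  ultimately have "(?g has_integral 2 * integral {0..} ?g) UNIV"
    by simp
  then have "2 * integral {0..} ?g = integral\<^sup>L lborel ?g"
    using has_integral_integral_real[OF gaussian_cos_integral(1)[OF t]] by (rule has_integral_unique)
  then have "integral {0..} ?g = exp (- pi * m^2 / t) / sqrt t / 2"
    using gaussian_cos_integral(2)[OF t] by simp
  then show ?thesis
    using integrable_integral[OF nonneg(1)] by simp
qed

lemma integral_gaussian_cos_tendsto:
  assumes t: "t > 0"
  shows "(\<lambda>N. integral {0..real N} (gaussian_cos t m)) \<longlonglongrightarrow> exp (- pi * m^2 / t) / sqrt t / 2"
proof -
  let ?g = "gaussian_cos t m"
  define g_upto where "g_upto N x = (if x \<in> {0..real N} then ?g x else 0)" for N x
  have integral_upto: "integral {0..} (g_upto N) = integral {0..real N} ?g" for N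
    unfolding g_upto_def integral_restrict_Int by (simp add: Int_absorb2 Int_commute)
  have integrable_upto: "g_upto N integrable_on {0..}" for N
  proof -
    have "(?g has_integral integral {0..real N} ?g) ({0..real N} \<inter> {0..})"
      using integrable_continuous_interval[OF continuous_on_gaussian_cos]
      by (simp add: Int_absorb2 integrable_integral)
    then show ?thesis
      unfolding g_upto_def has_integral_restrict_Int[symmetric] integrable_on_def by blast
  qed
  have "gaussian_cos t 0 = (\<lambda>b. exp (- pi * t * b^2))"
    by (simp add: gaussian_cos_def fun_eq_iff)
  then have gaussian: "(\<lambda>b. exp (- pi * t * b^2)) integrable_on {0..}"
    using gaussian_cos_has_integral_nonneg[OF t, of 0] by (metis integrable_on_def)
  have "(\<lambda>N. integral {0..} (g_upto N)) \<longlonglongrightarrow> integral {0..} ?g"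
  proof (rule dominated_convergence(2)[OF integrable_upto gaussian])
    fix N :: nat and x :: real
    show "norm (g_upto N x) \<le> exp (- pi * t * x^2)"
      unfolding g_upto_def gaussian_cos_def by (auto simp: abs_mult intro!: mult_left_le)
  next
    fix x :: real
    assume "x \<in> {0..}"
    obtain n where "x \<le> real n"
      using real_arch_simple by blast
    have "eventually (\<lambda>N. g_upto N x = ?g x) sequentially"
      using eventually_ge_at_top[of n]
      by eventually_elim (use \<open>x \<in> {0..}\<close> \<open>x \<le> real n\<close> in \<open>auto simp: g_upto_def\<close>)
    then show "(\<lambda>N. g_upto N x) \<longlonglongrightarrow> ?g x"
      by (rule tendsto_eventually)
  qed
  then show ?thesis
    using integral_upto integral_unique[OF gaussian_cos_has_integral_nonneg[OF t]] by simp
qed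

lemma has_integral_cos_2pi_mult:
  fixes n :: int
  shows "((\<lambda>a. cos (2 * pi * n * a)) has_integral (if n = 0 then 1/2 else 0)) {0..1/2}"
proof (cases "n = 0")
  case False
  have "((\<lambda>a. cos (2 * pi * n * a)) has_integral
          sin (2 * pi * n * (1/2)) / (2 * pi * n) - sin (2 * pi * n * 0) / (2 * pi * n)) {0..1/2}"
  proof (rule fundamental_theorem_of_calculus)
    show "((\<lambda>a. sin (2 * pi * n * a) / (2 * pi * n)) has_vector_derivative cos (2 * pi * n * x))
            (at x within {0..1/2})" for x
      using False unfolding has_vector_derivative_def
      by (intro derivative_eq_intros | force)+
  qed auto
  moreover have "sin (2 * pi * n * (1/2)) = 0"
    by (simp add: mult.commute)
  ultimately show ?thesis
    using False by simp
qed (use has_integral_const_real[of "1::real" 0 "1/2"] in simp)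

lemma has_integral_cos_mult_cos:
  fixes j m :: nat
  shows "((\<lambda>a. cos (2 * pi * j * a) * cos (2 * pi * m * a)) has_integral
          (if j = m then if m = 0 then 1/2 else 1/4 else 0)) {0..1/2}"
proof -
  have product: "cos (2 * pi * j * a) * cos (2 * pi * m * a) =
      cos (2 * pi * of_int (int j - int m) * a) / 2 + cos (2 * pi * of_int (int j + int m) * a) / 2" for a
    unfolding cos_times_cos by (simp add: algebra_simps add_divide_distrib)
  have coefficient: "(if int j - int m = 0 then 1/2 else 0) / 2 + (if int j + int m = 0 then 1/2 else 0) / 2 =
      (if j = m then if m = 0 then 1/2 else 1/4 else 0 :: real)"
    by auto
  show ?thesis
    unfolding product coefficient[symmetric]
    by (intro has_integral_add has_integral_divide has_integral_cos_2pi_mult)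
qed

lemma
  fixes f :: "nat \<Rightarrow> real \<Rightarrow> real"
  assumes cont: "\<And>k. continuous_on {a..b} (f k)"
    and bound: "\<And>k x. x \<in> {a..b} \<Longrightarrow> \<bar>f k x\<bar> \<le> M k"
    and M: "summable M"
  shows continuous_on_suminf_Weierstrass: "continuous_on {a..b} (\<lambda>x. \<Sum>k. f k x)"
    and sums_integral_Weierstrass: "(\<lambda>k. integral {a..b} (f k)) sums integral {a..b} (\<lambda>x. \<Sum>k. f k x)"
proof -
  have lim: "uniform_limit {a..b} (\<lambda>N x. \<Sum>k<N. f k x) (\<lambda>x. \<Sum>k. f k x) sequentially"
    using bound by (intro Weierstrass_m_test[OF _ M]) auto
  show "continuous_on {a..b} (\<lambda>x. \<Sum>k. f k x)"
    by (rule uniform_limit_theorem[OF _ lim]) (auto intro!: always_eventually continuous_on_sum cont)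
  obtain I J where I: "\<And>N. ((\<lambda>x. \<Sum>k<N. f k x) has_integral I N) {a..b}"
      and J: "((\<lambda>x. \<Sum>k. f k x) has_integral J) {a..b}" and "I \<longlonglongrightarrow> J"
    by (rule uniform_limit_integral[OF lim]) (auto intro!: continuous_on_sum cont)
  moreover have "I = (\<lambda>N. \<Sum>k<N. integral {a..b} (f k))"
    using integral_unique[OF I]
    by (simp add: fun_eq_iff integral_sum integrable_continuous_interval cont)
  ultimately show "(\<lambda>k. integral {a..b} (f k)) sums integral {a..b} (\<lambda>x. \<Sum>k. f k x)"
    unfolding sums_def using integral_unique[OF J] by simp
qed

definition gauss_term :: "real \<Rightarrow> nat \<Rightarrow> real \<Rightarrow> real" where
  "gauss_term t k a = exp (- pi * t * (real k + a)^2) + exp (- pi * t * (real k + 1 - a)^2)"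

definition gauss_dual_term :: "real \<Rightarrow> nat \<Rightarrow> real \<Rightarrow> real" where
  "gauss_dual_term t k a = (if k = 0 then 1 else 2) * exp (- pi * k^2 / t) * cos (2 * pi * k * a)"

lemma exp_neg_mult_le_power:
  assumes "c \<ge> 0" "real k \<le> y"
  shows "exp (- (c * y)) \<le> exp (- c) ^ k"
proof -
  have "real k * c \<le> c * y"
    using mult_right_mono[OF assms(2) assms(1)] by (simp add: mult.commute)
  then have "exp (- (c * y)) \<le> exp (real k * (- c))"
    by simp
  then show ?thesis
    by (simp only: exp_of_nat_mult)
qed

lemma real_le_power2: "real k \<le> real k ^ 2"
  by (metis le_square of_nat_le_iff of_nat_mult power2_eq_square)

lemma abs_gauss_term_le:
  assumes t: "t > 0" and a: "a \<in> {0..1/2}"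
  shows "\<bar>gauss_term t k a\<bar> \<le> 2 * exp (- pi * t) ^ k"
proof -
  have "real k ^ 2 \<le> (real k + a)^2" "real k ^ 2 \<le> (real k + 1 - a)^2"
    using a by (auto intro!: power_mono)
  then have "real k \<le> (real k + a)^2" "real k \<le> (real k + 1 - a)^2"
    using real_le_power2[of k] by linarith+
  then have "exp (- (pi * t * (real k + a)^2)) \<le> exp (- (pi * t)) ^ k"
      "exp (- (pi * t * (real k + 1 - a)^2)) \<le> exp (- (pi * t)) ^ k"
    using t by (auto intro!: exp_neg_mult_le_power)
  then show ?thesis
    by (simp add: gauss_term_def abs_of_nonneg add_nonneg_nonneg)
qed

lemma abs_gauss_dual_term_le:
  assumes t: "t > 0"
  shows "\<bar>gauss_dual_term t k a\<bar> \<le> 2 * exp (- pi / t) ^ k"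
proof -
  have "exp (- (pi / t * k^2)) \<le> exp (- (pi / t)) ^ k"
    using t real_le_power2[of k] by (intro exp_neg_mult_le_power) auto
  moreover have "\<bar>gauss_dual_term t k a\<bar> \<le> 2 * exp (- (pi / t * k^2)) * 1"
    unfolding gauss_dual_term_def abs_mult by (intro mult_mono) auto
  ultimately show ?thesis
    by simp
qed

lemma abs_mult_cos_le: "\<bar>x * cos y\<bar> \<le> \<bar>x :: real\<bar>"
  unfolding abs_mult by (rule mult_left_le) auto

lemma summable_two_exp_power: "c < 0 \<Longrightarrow> summable (\<lambda>k. 2 * exp c ^ k :: real)"
  by (intro summable_mult summable_geometric) simp

lemma continuous_on_gauss_term: "continuous_on S (gauss_term t k)"
  unfolding gauss_term_def by (intro continuous_intros)

lemma continuous_on_gauss_dual_term: "continuous_on S (gauss_dual_term t k)"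
  unfolding gauss_dual_term_def by (intro continuous_intros)

lemma summable_gauss_term: "t > 0 \<Longrightarrow> a \<in> {0..1/2} \<Longrightarrow> summable (\<lambda>k. gauss_term t k a)"
  by (rule summable_comparison_test'[OF summable_two_exp_power[of "- pi * t"]])
     (use abs_gauss_term_le in auto)

lemma summable_gauss_dual_term: "t > 0 \<Longrightarrow> summable (\<lambda>k. gauss_dual_term t k a)"
  by (rule summable_comparison_test'[OF summable_two_exp_power[of "- pi / t"]])
     (use abs_gauss_dual_term_le in auto)

lemma integral_gauss_term_mult_cos:
  fixes k m :: nat
  shows "integral {0..1/2} (\<lambda>a. gauss_term t k a * cos (2 * pi * m * a)) =
   integral {real k..real k + 1} (gaussian_cos t m)"
proof -
  let ?g = "gaussian_cos t m"
  have int: "?g integrable_on {c..d}" for c d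
    by (rule integrable_continuous_interval[OF continuous_on_gaussian_cos])
  have "integral {0..1/2} (\<lambda>a. exp (- pi * t * (real k + a)^2) * cos (2 * pi * m * a)) =
        integral {0..1/2} (?g \<circ> (+) (real k))"
    by (rule integral_cong) (simp add: gaussian_cos_def cos_2pi_mult_add_nat)
  also have "\<dots> = integral {real k..real k + 1/2} ?g"
    using integral_shift_Icc_real[of 0 "1/2" ?g "real k"] by (simp add: add.commute)
  finally have left: "integral {0..1/2} (\<lambda>a. exp (- pi * t * (real k + a)^2) * cos (2 * pi * m * a)) =
      integral {real k..real k + 1/2} ?g" .
  have "cos (2 * pi * m * (real k + 1 - a)) = cos (2 * pi * m * a)" for a
    using cos_2pi_mult_diff_nat[of m "Suc k" a] by (simp add: add.commute)
  then have "integral {0..1/2} (\<lambda>a. exp (- pi * t * (real k + 1 - a)^2) * cos (2 * pi * m * a)) =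
        integral {0..1/2} (\<lambda>a. (?g \<circ> (+) (real k + 1)) (- a))"
    by (intro integral_cong) (simp add: gaussian_cos_def)
  also have "\<dots> = integral {- (1/2)..0} (?g \<circ> (+) (real k + 1))"
    using Henstock_Kurzweil_Integration.integral_reflect_real[of 0 "- (1/2)" "?g \<circ> (+) (real k + 1)"]
    by (simp only: minus_zero minus_minus)
  also have "\<dots> = integral {- (1/2) + (real k + 1)..0 + (real k + 1)} ?g"
    by (rule integral_shift_Icc_real)
  finally have right: "integral {0..1/2} (\<lambda>a. exp (- pi * t * (real k + 1 - a)^2) * cos (2 * pi * m * a)) =
      integral {real k + 1/2..real k + 1} ?g"
    by (simp add: add.commute)
  have "integral {0..1/2} (\<lambda>a. gauss_term t k a * cos (2 * pi * m * a)) =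
      integral {0..1/2} (\<lambda>a. exp (- pi * t * (real k + a)^2) * cos (2 * pi * m * a)) +
      integral {0..1/2} (\<lambda>a. exp (- pi * t * (real k + 1 - a)^2) * cos (2 * pi * m * a))"
    unfolding gauss_term_def distrib_right
    by (intro integral_add integrable_continuous_interval continuous_intros)
  also have "\<dots> = integral {real k..real k + 1} ?g"
    unfolding left right by (intro Henstock_Kurzweil_Integration.integral_combine int) auto
  finally show ?thesis .
qed

lemma sum_integral_gaussian_cos_unit_intervals:
  "(\<Sum>k<N. integral {real k..real k + 1} (gaussian_cos t m)) = integral {0..real N} (gaussian_cos t m)"
proof (induction N)
  case (Suc N)
  then show ?case
    using Henstock_Kurzweil_Integration.integral_combine[where a=0 and c="real N" and b="real N + 1" and f="gaussian_cos t m"]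
      integrable_continuous_interval[OF continuous_on_gaussian_cos]
    by (simp add: add.commute)
qed simp

lemma integral_suminf_gauss_term_mult_cos:
  fixes m :: nat
  assumes t: "t > 0"
  shows "integral {0..1/2} (\<lambda>a. (\<Sum>k. gauss_term t k a) * cos (2 * pi * m * a)) =
         exp (- pi * real m ^ 2 / t) / sqrt t / 2"
proof -
  let ?c = "\<lambda>k. integral {0..1/2} (\<lambda>a. gauss_term t k a * cos (2 * pi * m * a))"
  have decay: "- pi * t < 0"
    using t by simp
  have bound: "\<bar>gauss_term t k a * cos (2 * pi * m * a)\<bar> \<le> 2 * exp (- pi * t) ^ k"
    if "a \<in> {0..1/2}" for k a
    using order_trans[OF abs_mult_cos_le abs_gauss_term_le[OF t that]] .
  have cont: "continuous_on {0..1/2} (\<lambda>a. gauss_term t k a * cos (2 * pi * m * a))" for k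
    by (intro continuous_on_mult continuous_on_gauss_term continuous_on_cos continuous_on_mult_left continuous_on_id)
  have "?c sums integral {0..1/2} (\<lambda>a. \<Sum>k. gauss_term t k a * cos (2 * pi * m * a))"
    by (rule sums_integral_Weierstrass[OF cont bound summable_two_exp_power[OF decay]])
  moreover have "?c sums (exp (- pi * real m ^ 2 / t) / sqrt t / 2)"
    using integral_gaussian_cos_tendsto[OF t, of m]
    unfolding sums_def integral_gauss_term_mult_cos sum_integral_gaussian_cos_unit_intervals .
  ultimately have "integral {0..1/2} (\<lambda>a. \<Sum>k. gauss_term t k a * cos (2 * pi * m * a)) =
      exp (- pi * real m ^ 2 / t) / sqrt t / 2"
    by (rule sums_unique2)
  moreover have "integral {0..1/2} (\<lambda>a. \<Sum>k. gauss_term t k a * cos (2 * pi * m * a)) =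
      integral {0..1/2} (\<lambda>a. (\<Sum>k. gauss_term t k a) * cos (2 * pi * m * a))"
    using summable_gauss_term[OF t] by (intro integral_cong) (simp add: suminf_mult2)
  ultimately show ?thesis
    by simp
qed

lemma integral_gauss_dual_term_mult_cos:
  fixes k m :: nat
  shows "integral {0..1/2} (\<lambda>a. gauss_dual_term t k a * cos (2 * pi * m * a)) =
    (if k = m then exp (- pi * real m ^ 2 / t) / 2 else 0)"
proof -
  have "((\<lambda>a. ((if k = 0 then 1 else 2) * exp (- pi * k^2 / t)) * (cos (2 * pi * k * a) * cos (2 * pi * m * a)))
      has_integral ((if k = 0 then 1 else 2) * exp (- pi * k^2 / t)) * (if k = m then if m = 0 then 1/2 else 1/4 else 0))
      {0..1/2}"
    by (intro has_integral_mult_right has_integral_cos_mult_cos)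
  then show ?thesis
    by (intro integral_unique) (simp add: gauss_dual_term_def mult.assoc split: if_splits)
qed

lemma integral_suminf_gauss_dual_term_mult_cos:
  fixes m :: nat
  assumes t: "t > 0"
  shows "integral {0..1/2} (\<lambda>a. (\<Sum>k. gauss_dual_term t k a) * cos (2 * pi * m * a)) =
         exp (- pi * real m ^ 2 / t) / 2"
proof -
  let ?c = "\<lambda>k. integral {0..1/2} (\<lambda>a. gauss_dual_term t k a * cos (2 * pi * m * a))"
  have decay: "- pi / t < 0"
    using t by simp
  have bound: "\<bar>gauss_dual_term t k a * cos (2 * pi * m * a)\<bar> \<le> 2 * exp (- pi / t) ^ k" for k a
    using order_trans[OF abs_mult_cos_le abs_gauss_dual_term_le[OF t]] .
  have cont: "continuous_on {0..1/2} (\<lambda>a. gauss_dual_term t k a * cos (2 * pi * m * a))" for k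
    by (intro continuous_on_mult continuous_on_gauss_dual_term continuous_on_cos continuous_on_mult_left continuous_on_id)
  have "?c sums integral {0..1/2} (\<lambda>a. \<Sum>k. gauss_dual_term t k a * cos (2 * pi * m * a))"
    by (rule sums_integral_Weierstrass[OF cont bound summable_two_exp_power[OF decay]])
  moreover have "?c sums (exp (- pi * real m ^ 2 / t) / 2)"
    unfolding integral_gauss_dual_term_mult_cos by (rule sums_single)
  ultimately have "integral {0..1/2} (\<lambda>a. \<Sum>k. gauss_dual_term t k a * cos (2 * pi * m * a)) =
      exp (- pi * real m ^ 2 / t) / 2"
    by (rule sums_unique2)
  moreover have "integral {0..1/2} (\<lambda>a. \<Sum>k. gauss_dual_term t k a * cos (2 * pi * m * a)) =
      integral {0..1/2} (\<lambda>a. (\<Sum>k. gauss_dual_term t k a) * cos (2 * pi * m * a))"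
    using summable_gauss_dual_term[OF t] by (intro integral_cong) (simp add: suminf_mult2)
  ultimately show ?thesis
    by simp
qed

theorem poisson_summation_gauss:
  assumes t: "t > 0" and a: "a \<in> {0..1/2}"
  shows "(\<Sum>k. gauss_term t k a) = (\<Sum>k. gauss_dual_term t k a) / sqrt t"
proof -
  define \<phi> where "\<phi> a = (\<Sum>k. gauss_term t k a) - (\<Sum>k. gauss_dual_term t k a) / sqrt t" for a
  have decay: "- pi * t < 0" "- pi / t < 0"
    using t by simp_all
  have cont_term: "continuous_on {0..1/2} (\<lambda>a. \<Sum>k. gauss_term t k a)"
    using abs_gauss_term_le[OF t]
    by (intro continuous_on_suminf_Weierstrass[OF continuous_on_gauss_term _ summable_two_exp_power[OF decay(1)]])
  have cont_dual: "continuous_on {0..1/2} (\<lambda>a. \<Sum>k. gauss_dual_term t k a)"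
    using abs_gauss_dual_term_le[OF t]
    by (intro continuous_on_suminf_Weierstrass[OF continuous_on_gauss_dual_term _ summable_two_exp_power[OF decay(2)]])
  have "sqrt t \<noteq> 0"
    using t by simp
  then have cont: "continuous_on {0..1/2} \<phi>"
    unfolding \<phi>_def by (intro continuous_on_diff continuous_on_divide cont_term cont_dual continuous_on_const) auto
  have "integral {0..1/2} (\<lambda>a. \<phi> a * cos (2 * pi * m * a)) = 0" for m :: nat
  proof -
    have "integral {0..1/2} (\<lambda>a. \<phi> a * cos (2 * pi * m * a)) =
        integral {0..1/2} (\<lambda>a. (\<Sum>k. gauss_term t k a) * cos (2 * pi * m * a)) -
        integral {0..1/2} (\<lambda>a. (\<Sum>k. gauss_dual_term t k a) * cos (2 * pi * m * a)) / sqrt t"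
      unfolding \<phi>_def left_diff_distrib times_divide_eq_left integral_divide[symmetric]
      by (intro integral_diff integrable_continuous_interval continuous_on_mult continuous_on_divide
          cont_term cont_dual continuous_on_cos continuous_on_mult_left continuous_on_id continuous_on_const)
         (use \<open>sqrt t \<noteq> 0\<close> in auto)
    then show ?thesis
      using t by (simp add: integral_suminf_gauss_term_mult_cos integral_suminf_gauss_dual_term_mult_cos)
  qed
  then have "\<phi> a = 0"
    using cos_orthogonal_imp_zero[OF cont _ a] by blast
  then show ?thesis
    by (simp add: \<phi>_def)
qed

lemma summable_mult_power_superlinear:
  fixes q :: real
  assumes q: "0 \<le> q" "q < 1" and c: "\<And>k. \<bar>c k\<bar> \<le> C" and e: "\<And>k. k \<le> e k"
  shows "summable (\<lambda>k. c k * q ^ e k)"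
proof (rule summable_comparison_test'[OF summable_mult[OF summable_geometric, of q C]])
  fix k
  have "\<bar>c k\<bar> * q ^ e k \<le> C * q ^ k"
    using q c[of k] e[of k] by (intro mult_mono power_decreasing) auto
  then show "norm (c k * q ^ e k) \<le> C * q ^ k"
    using q by (simp add: abs_mult)
qed (use q in auto)

definition jacobi_theta4 :: "real \<Rightarrow> real" where
  "jacobi_theta4 q = (\<Sum>k. (if k = 0 then 1 else 2) * (- 1) ^ k * q ^ (k^2))"

definition odd_square_series :: "real \<Rightarrow> real" where
  "odd_square_series q = (\<Sum>k. q ^ ((2 * k + 1)^2))"

lemma summable_jacobi_theta4:
  fixes q :: real
  assumes "0 \<le> q" "q < 1"
  shows "summable (\<lambda>k. (if k = 0 then 1 else 2) * (- 1) ^ k * q ^ (k^2))"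
  using assms by (intro summable_mult_power_superlinear[where C=2]) (auto simp: power2_eq_square abs_mult power_abs)

lemma summable_odd_square_series:
  fixes q :: real
  assumes "0 \<le> q" "q < 1"
  shows "summable (\<lambda>k. q ^ ((2 * k + 1)^2))"
  using summable_mult_power_superlinear[OF assms, of "\<lambda>_. 1" 1 "\<lambda>k. (2 * k + 1)^2"]
  by (simp add: power2_eq_square)

lemma has_sum_int_split:
  fixes f :: "int \<Rightarrow> 'a::banach"
  assumes nonneg: "summable (\<lambda>k. norm (f (int k)))"
    and neg: "summable (\<lambda>k. norm (f (- int k - 1)))"
  shows "(f has_sum (\<Sum>k. f (int k)) + (\<Sum>k. f (- int k - 1))) UNIV"
proof -
  have "((\<lambda>k. f (int k)) has_sum (\<Sum>k. f (int k))) UNIV"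
    by (rule norm_summable_imp_has_sum[OF nonneg summable_sums[OF summable_norm_cancel[OF nonneg]]])
  then have A: "(f has_sum (\<Sum>k. f (int k))) (range int)"
    using has_sum_reindex[of int UNIV f] by (simp add: comp_def)
  have "((\<lambda>k. f (- int k - 1)) has_sum (\<Sum>k. f (- int k - 1))) UNIV"
    by (rule norm_summable_imp_has_sum[OF neg summable_sums[OF summable_norm_cancel[OF neg]]])
  moreover have "inj_on (\<lambda>k::nat. - int k - 1) UNIV"
    by (simp add: inj_on_def)
  ultimately have B: "(f has_sum (\<Sum>k. f (- int k - 1))) (range (\<lambda>k. - int k - 1))"
    using has_sum_reindex[of "\<lambda>k::nat. - int k - 1" UNIV f] by (simp add: comp_def)
  have disjoint: "range int \<inter> range (\<lambda>k. - int k - 1) = {}"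
    by auto
  have "n \<in> range int \<union> range (\<lambda>k. - int k - 1)" for n
  proof (cases "n \<ge> 0")
    case True
    then have "n = int (nat n)"
      by simp
    then show ?thesis
      by blast
  next
    case False
    then have "n = - int (nat (- n - 1)) - 1"
      by simp
    then show ?thesis
      by blast
  qed
  then have "range int \<union> range (\<lambda>k. - int k - 1) = UNIV"
    by blast
  then show ?thesis
    using has_sum_Un_disjoint[OF A B disjoint] by simp
qed

lemma has_sum_int_even:
  fixes f :: "int \<Rightarrow> real"
  assumes even: "\<And>n. f (- n) = f n" and summable: "summable (\<lambda>k. \<bar>f (int k)\<bar>)"
  shows "(f has_sum (\<Sum>k. (if k = 0 then 1 else 2) * f (int k))) UNIV"
proof -
  have shift: "f (- int k - 1) = f (int (Suc k))" for k
  proof -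
    have "- int k - 1 = - int (Suc k)"
      by simp
    then show ?thesis
      by (simp only: even)
  qed
  have summable_Suc: "summable (\<lambda>k. \<bar>f (int (Suc k))\<bar>)"
    using summable by (subst summable_Suc_iff)
  have tail: "summable (\<lambda>k. f (int (Suc k)))"
    using summable_Suc by (rule summable_rabs_cancel)
  have "summable (\<lambda>k. (if Suc k = 0 then 1 else 2) * f (int (Suc k)))"
    using summable_mult[OF tail, of 2] by simp
  then have "summable (\<lambda>k. (if k = 0 then 1 else 2) * f (int k))"
    by (rule summable_Suc_iff[THEN iffD1])
  from suminf_split_head[OF this]
  have "(\<Sum>k. (if k = 0 then 1 else 2) * f (int k)) = f 0 + (\<Sum>k. 2 * f (int (Suc k)))"
    by simp
  also have "\<dots> = f 0 + 2 * (\<Sum>k. f (int (Suc k)))"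
    using suminf_mult[OF tail, of 2] by simp
  also have "\<dots> = (\<Sum>k. f (int k)) + (\<Sum>k. f (- int k - 1))"
    using suminf_split_head[OF summable_rabs_cancel[OF summable]] by (simp add: shift)
  finally show ?thesis
    using has_sum_int_split[of f] summable summable_Suc by (simp add: shift)
qed

lemma has_sum_int_reflect_half:
  fixes f :: "int \<Rightarrow> real"
  assumes reflect: "\<And>n. f (- n - 1) = f n" and summable: "summable (\<lambda>k. \<bar>f (int k)\<bar>)"
  shows "(f has_sum 2 * (\<Sum>k. f (int k))) UNIV"
  using has_sum_int_split[of f] summable by (simp add: reflect)

lemma exp_mult_of_nat: "exp (c * real n) = exp c ^ n"
  by (simp add: exp_of_nat_mult[symmetric] mult.commute)

lemma theta2_imaginary_axis:
  assumes x: "x > 0"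
  shows "theta2 0 (2 * \<i> * complex_of_real x) = complex_of_real (2 * odd_square_series (exp (- pi * x / 2)))"
proof -
  define q where "q = exp (- pi * x / 2)"
  have q: "0 \<le> q" "q < 1"
    using x by (auto simp: q_def)
  define f where "f n = exp (- 2 * pi * x * (of_int n + 1/2)^2)" for n :: int
  have summand: "exp (pi * \<i> * (2 * \<i> * complex_of_real x) * (of_int n + 1/2)^2) * exp (2 * \<i> * 0 * (of_int n + 1/2))
      = complex_of_real (f n)" for n
  proof -
    have "pi * \<i> * (2 * \<i> * complex_of_real x) * (of_int n + 1/2)^2 =
        (\<i> * \<i>) * (2 * complex_of_real pi * complex_of_real x * (of_int n + 1/2)^2)"
      by (simp only: mult_ac)
    also have "\<dots> = complex_of_real (- 2 * pi * x * (of_int n + 1/2)^2)"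
      by simp
    finally have "exp (pi * \<i> * (2 * \<i> * complex_of_real x) * (of_int n + 1/2)^2) = complex_of_real (f n)"
      unfolding f_def by (simp only: exp_of_real)
    then show ?thesis
      by simp
  qed
  have f_nat: "f (int k) = q ^ ((2 * k + 1)^2)" for k
  proof -
    have "- 2 * pi * x * (real k + 1/2)^2 = - pi * x / 2 * real ((2 * k + 1)^2)"
      by (simp add: power2_eq_square algebra_simps)
    then show ?thesis
      unfolding f_def q_def of_int_of_nat_eq exp_mult_of_nat[symmetric] by (simp only:)
  qed
  have "f (- n - 1) = f n" for n
  proof -
    have "(of_int (- n - 1) + 1/2 :: real)^2 = (of_int n + 1/2)^2"
      by (simp add: power2_eq_square algebra_simps)
    then show ?thesis
      by (simp only: f_def)
  qed
  moreover have "summable (\<lambda>k. \<bar>f (int k)\<bar>)"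
    using summable_odd_square_series[OF q] q by (simp add: f_nat)
  ultimately have "(f has_sum 2 * odd_square_series q) UNIV"
    using has_sum_int_reflect_half[of f] by (simp add: f_nat odd_square_series_def)
  then show ?thesis
    unfolding theta2_def summand q_def[symmetric] by (intro infsumI has_sum_of_real)
qed

lemma theta3_imaginary_axis:
  assumes x: "x > 0"
  shows "theta3 (complex_of_real (pi/2)) (\<i> / 2 * complex_of_real x) =
    complex_of_real (jacobi_theta4 (exp (- pi * x / 2)))"
proof -
  define q where "q = exp (- pi * x / 2)"
  have q: "0 \<le> q" "q < 1"
    using x by (auto simp: q_def)
  define f where "f n = exp (- pi * x / 2 * (of_int n)^2) * cos (pi * of_int n)" for n :: int
  have summand: "exp (pi * \<i> * (\<i> / 2 * complex_of_real x) * (of_int n)^2) *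
      exp (2 * \<i> * complex_of_real (pi/2) * of_int n) = complex_of_real (f n)" for n
  proof -
    have "pi * \<i> * (\<i> / 2 * complex_of_real x) * (of_int n)^2 =
        (\<i> * \<i>) * (complex_of_real pi * complex_of_real x * (of_int n)^2) / 2"
      by (simp only: mult_ac times_divide_eq_right times_divide_eq_left)
    also have "\<dots> = complex_of_real (- pi * x / 2 * (of_int n)^2)"
      by simp
    finally have gauss: "exp (pi * \<i> * (\<i> / 2 * complex_of_real x) * (of_int n)^2) =
        complex_of_real (exp (- pi * x / 2 * (of_int n)^2))"
      by (simp only: exp_of_real)
    have "2 * \<i> * complex_of_real (pi/2) * of_int n = \<i> * complex_of_real (pi * of_int n)"
      by simp
    then have "exp (2 * \<i> * complex_of_real (pi/2) * of_int n) = cis (pi * of_int n)"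
      by (simp only: cis_conv_exp)
    also have "\<dots> = complex_of_real (cos (pi * of_int n))"
      by (simp add: complex_eq_iff)
    finally show ?thesis
      unfolding gauss f_def of_real_mult by (simp only:)
  qed
  have f_nat: "f (int k) = (- 1) ^ k * q ^ (k^2)" for k
    unfolding f_def q_def of_int_of_nat_eq exp_mult_of_nat[symmetric]
    by (simp add: mult.commute)
  have "f (- n) = f n" for n
    by (simp add: f_def)
  moreover have "summable (\<lambda>k. \<bar>f (int k)\<bar>)"
    using summable_mult_power_superlinear[OF q, of "\<lambda>_. 1" 1 "\<lambda>k. k^2"]
    using q by (simp add: f_nat abs_mult power_abs power2_eq_square)
  ultimately have "(f has_sum jacobi_theta4 q) UNIV"
    using has_sum_int_even[of f] by (simp add: f_nat jacobi_theta4_def mult.assoc)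
  then show ?thesis
    unfolding theta3_def summand q_def[symmetric] by (intro infsumI has_sum_of_real)
qed

lemma jacobi_theta4_0 [simp]: "jacobi_theta4 0 = 1"
proof -
  have "(\<lambda>k. (if k = 0 then 1 else 2) * (- 1) ^ k * 0 ^ (k^2) :: real) = (\<lambda>k. if k = 0 then 1 else 0)"
    by (auto simp: fun_eq_iff)
  then show ?thesis
    using sums_single[of 0 "\<lambda>_. 1 :: real"] by (simp add: jacobi_theta4_def sums_iff)
qed

lemma power_diff_le_mult:
  fixes q q0 :: real
  assumes "0 \<le> q" "q \<le> q0"
  shows "q0 ^ Suc n - q ^ Suc n \<le> real (Suc n) * q0 ^ n * (q0 - q)"
proof (induction n)
  case (Suc n)
  have "q0 ^ Suc (Suc n) - q ^ Suc (Suc n) = q0 * (q0 ^ Suc n - q ^ Suc n) + q ^ Suc n * (q0 - q)"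
    by (simp add: algebra_simps)
  also have "\<dots> \<le> q0 * (real (Suc n) * q0 ^ n * (q0 - q)) + q0 ^ Suc n * (q0 - q)"
    using Suc assms by (intro add_mono mult_left_mono mult_right_mono power_mono) auto
  also have "\<dots> = real (Suc (Suc n)) * q0 ^ Suc n * (q0 - q)"
    by (simp add: algebra_simps)
  finally show ?case .
qed simp

lemma jacobi_theta4_tail_term_le:
  fixes q q0 :: real
  assumes q: "0 \<le> q" "q \<le> q0" "q0 \<le> 1/4"
  shows "\<bar>q ^ ((k + 2)^2) - q0 ^ ((k + 2)^2)\<bar> \<le> (q0 - q) * (1/16) ^ (k + 1)"
proof -
  have square: "(k + 2)^2 = Suc (k^2 + 4 * k + 3)"
    by (simp add: power2_eq_square)
  have coefficient: "real ((k + 2)^2) \<le> 4 ^ (k + 1)"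
  proof (induction k)
    case (Suc k)
    have "real ((Suc k + 2)^2) \<le> 4 * real ((k + 2)^2)"
      by (simp add: power2_eq_square)
    with Suc show ?case
      by simp
  qed simp
  have power: "q0 ^ (k^2 + 4 * k + 3) \<le> (1/64) ^ (k + 1)"
  proof -
    have "q0 ^ (k^2 + 4 * k + 3) \<le> (q0 ^ 3) ^ (k + 1)"
      unfolding power_mult[symmetric] using q by (intro power_decreasing) auto
    also have "\<dots> \<le> ((1/4) ^ 3) ^ (k + 1)"
      using q by (intro power_mono) auto
    finally show ?thesis
      by (simp add: power_divide)
  qed
  have "q0 ^ ((k + 2)^2) - q ^ ((k + 2)^2) \<le> real ((k + 2)^2) * q0 ^ (k^2 + 4 * k + 3) * (q0 - q)"
    using power_diff_le_mult[OF q(1,2), of "k^2 + 4 * k + 3"] unfolding square by simp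
  also have "\<dots> \<le> 4 ^ (k + 1) * (1/64) ^ (k + 1) * (q0 - q)"
    using coefficient power q by (intro mult_right_mono mult_mono) auto
  also have "\<dots> = (q0 - q) * (1/16) ^ (k + 1)"
    by (simp add: power_mult_distrib[symmetric])
  finally show ?thesis
    using q by (simp add: power_mono)
qed

lemma jacobi_theta4_diff_bound:
  fixes q q0 :: real
  assumes q: "0 \<le> q" "q \<le> q0" "q0 \<le> 1/4"
  shows "\<bar>jacobi_theta4 q - jacobi_theta4 q0 - 2 * (q0 - q)\<bar> \<le> 2/15 * (q0 - q)"
proof -
  define d where "d k = (if k = 0 then 1 else 2) * (- 1) ^ k * (q ^ (k^2) - q0 ^ (k^2))" for k
  have d_eq: "d = (\<lambda>k. (if k = 0 then 1 else 2) * (- 1) ^ k * q ^ (k^2) -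
      (if k = 0 then 1 else 2) * (- 1) ^ k * q0 ^ (k^2))"
    by (simp add: d_def fun_eq_iff right_diff_distrib)
  have summable_d: "summable d"
    unfolding d_eq using q by (intro summable_diff summable_jacobi_theta4) auto
  have "jacobi_theta4 q - jacobi_theta4 q0 = suminf d"
    unfolding d_eq jacobi_theta4_def using q by (intro suminf_diff summable_jacobi_theta4) auto
  also have "suminf d = (\<Sum>k. d (k + 2)) + 2 * (q0 - q)"
    using suminf_split_initial_segment[OF summable_d, of 2] by (simp add: d_def numeral_2_eq_2)
  finally have split: "jacobi_theta4 q - jacobi_theta4 q0 - 2 * (q0 - q) = (\<Sum>k. d (k + 2))"
    by simp
  have "(\<lambda>k. 2 * (q0 - q) / 16 * (1/16) ^ k) sums (2 * (q0 - q) / 16 * (1 / (1 - 1/16)))"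
    by (intro sums_mult geometric_sums) simp
  moreover have "(\<lambda>k. 2 * (q0 - q) / 16 * (1/16) ^ k) = (\<lambda>k. 2 * (q0 - q) * (1/16) ^ (k + 1))"
    by (simp add: fun_eq_iff)
  moreover have "2 * (q0 - q) / 16 * (1 / (1 - 1/16)) = 2/15 * (q0 - q)"
    by simp
  ultimately have geometric: "(\<lambda>k. 2 * (q0 - q) * (1/16) ^ (k + 1)) sums (2/15 * (q0 - q))"
    by (simp only:)
  have tail: "\<bar>d (k + 2)\<bar> \<le> 2 * (q0 - q) * (1/16) ^ (k + 1)" for k
  proof -
    have "\<bar>d (k + 2)\<bar> = 2 * \<bar>q ^ ((k + 2)^2) - q0 ^ ((k + 2)^2)\<bar>"
      by (simp add: d_def abs_mult)
    also have "\<dots> \<le> 2 * ((q0 - q) * (1/16) ^ (k + 1))"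
      using jacobi_theta4_tail_term_le[OF q, of k] by (rule mult_left_mono) simp
    finally show ?thesis
      by (simp only: mult.assoc)
  qed
  have "summable (\<lambda>k. \<bar>d (k + 2)\<bar>)"
    by (rule summable_comparison_test'[OF sums_summable[OF geometric]]) (simp only: real_norm_def abs_abs tail)
  then have "\<bar>\<Sum>k. d (k + 2)\<bar> \<le> 2/15 * (q0 - q)"
    using summable_rabs suminf_le[OF tail _ sums_summable[OF geometric]] sums_unique[OF geometric]
    by (metis order_trans)
  then show ?thesis
    unfolding split .
qed


lemma jacobi_theta4_ge:
  assumes "0 \<le> q" "q \<le> 1/4"
  shows "7/15 \<le> jacobi_theta4 q"
  using jacobi_theta4_diff_bound[OF order_refl assms, unfolded abs_le_iff, THEN conjunct1] assms by simp

lemma jacobi_theta4_square_diff_ge: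
  assumes q: "0 \<le> q" "q \<le> q0" "q0 \<le> 1/4"
  shows "392/225 * (q0 - q) \<le> jacobi_theta4 q ^ 2 - jacobi_theta4 q0 ^ 2"
proof -
  have diff: "28/15 * (q0 - q) \<le> jacobi_theta4 q - jacobi_theta4 q0"
    using jacobi_theta4_diff_bound[OF q, unfolded abs_le_iff] by linarith
  have "14/15 \<le> jacobi_theta4 q + jacobi_theta4 q0"
    using jacobi_theta4_ge[of q] jacobi_theta4_ge[of q0] q by simp
  then have "28/15 * (q0 - q) * (14/15) \<le> (jacobi_theta4 q - jacobi_theta4 q0) * (jacobi_theta4 q + jacobi_theta4 q0)"
    using diff q by (intro mult_mono) auto
  moreover have "(jacobi_theta4 q - jacobi_theta4 q0) * (jacobi_theta4 q + jacobi_theta4 q0) =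
      jacobi_theta4 q ^ 2 - jacobi_theta4 q0 ^ 2"
    by (simp add: power2_eq_square algebra_simps)
  ultimately show ?thesis
    by linarith
qed

lemma odd_square_series_nonneg: "0 \<le> q \<Longrightarrow> q < 1 \<Longrightarrow> 0 \<le> odd_square_series q"
  unfolding odd_square_series_def by (intro suminf_nonneg summable_odd_square_series) auto

lemma odd_square_series_mono:
  assumes "0 \<le> q" "q \<le> q0" "q0 < 1"
  shows "odd_square_series q \<le> odd_square_series q0"
  unfolding odd_square_series_def using assms
  by (intro suminf_le summable_odd_square_series power_mono) auto

lemma Psi_bounds:
  assumes small: "exp (- pi * y) \<le> 1/4"
  shows "0 \<le> Psi y" "Psi y \<le> 2 * exp (- pi * y)"
proof -
  define q where "q = exp (- pi * y)"
  have q: "0 < q" "q \<le> 1/4"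
    using small by (simp_all add: q_def)
  have summand: "real (Suc k) * exp (- pi * y * (real (Suc k))^2) = real (Suc k) * q ^ ((Suc k)^2)" for k
    unfolding q_def exp_mult_of_nat[symmetric] by (simp add: mult.commute)
  have bound: "real (Suc k) * q ^ ((Suc k)^2) \<le> q * (1/2) ^ k" for k
  proof -
    have "real (Suc k) \<le> 2 ^ k"
      by (induction k) auto
    moreover have "q ^ ((Suc k)^2) \<le> q * q ^ k"
    proof -
      have "(Suc k)^2 = Suc (k^2 + 2 * k)"
        by (simp add: power2_eq_square)
      then have "q ^ ((Suc k)^2) = q * q ^ (k^2 + 2 * k)"
        by simp
      then show ?thesis
        using q by (auto intro!: mult_left_mono power_decreasing)
    qed
    ultimately have "real (Suc k) * q ^ ((Suc k)^2) \<le> 2 ^ k * (q * q ^ k)"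
      using q by (intro mult_mono) auto
    also have "\<dots> = q * (2 * q) ^ k"
      by (simp add: power_mult_distrib)
    also have "\<dots> \<le> q * (1/2) ^ k"
      using q by (intro mult_left_mono power_mono) auto
    finally show ?thesis .
  qed
  have geometric: "(\<lambda>k. q * (1/2) ^ k) sums (2 * q)"
    using sums_mult[OF geometric_sums[of "1/2 :: real"], of q] by (simp add: mult.commute)
  have summable: "summable (\<lambda>k. real (Suc k) * q ^ ((Suc k)^2))"
    by (rule summable_comparison_test'[OF sums_summable[OF geometric]]) (use bound q in auto)
  show "0 \<le> Psi y"
    unfolding Psi_def summand using q by (intro suminf_nonneg summable) auto
  show "Psi y \<le> 2 * exp (- pi * y)"
    unfolding Psi_def summand q_def[symmetric]
    using suminf_le[OF bound summable sums_summable[OF geometric]] sums_unique[OF geometric] by simp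
qed

lemma exp_neg_pi_half_le: "exp (- pi / 2) \<le> 1/4"
proof -
  have "65/32 \<le> exp (3/4 :: real)"
    using exp_lower_Taylor_quadratic[of "3/4 :: real"] by (simp add: power2_eq_square)
  then have "(65/32)^2 \<le> exp (3/4 :: real) ^ 2"
    by (intro power_mono) auto
  also have "\<dots> = exp (3/2)"
    by (simp add: power2_eq_square exp_add[symmetric])
  also have "\<dots> \<le> exp (pi / 2)"
    using pi_gt3 by simp
  finally have "4 \<le> exp (pi / 2)"
    by (simp add: power2_eq_square)
  then show ?thesis
    by (simp add: exp_minus field_simps)
qed

lemma jacobi_theta4_eq_odd_square_series:
  "jacobi_theta4 (exp (- pi / 2)) = 2 * sqrt 2 * odd_square_series (exp (- pi / 2))"
proof -
  define q0 where "q0 = exp (- pi / 2)"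
  have q0: "0 \<le> q0" "q0 < 1"
    by (simp_all add: q0_def)
  have "gauss_term 2 k (1/2) = 2 * q0 ^ ((2 * k + 1)^2)" for k
  proof -
    have "- pi * 2 * (real k + 1/2)^2 = - pi / 2 * real ((2 * k + 1)^2)"
      "- pi * 2 * (real k + 1 - 1/2)^2 = - pi / 2 * real ((2 * k + 1)^2)"
      by (simp_all add: power2_eq_square algebra_simps)
    then show ?thesis
      unfolding gauss_term_def q0_def exp_mult_of_nat[symmetric] by (simp only:)
  qed
  then have "(\<Sum>k. gauss_term 2 k (1/2)) = 2 * odd_square_series q0"
    using suminf_mult[OF summable_odd_square_series[OF q0], of 2] by (simp add: odd_square_series_def)
  moreover have "gauss_dual_term 2 k (1/2) = (if k = 0 then 1 else 2) * (- 1) ^ k * q0 ^ (k^2)" for k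
  proof -
    have "exp (- pi * real k ^ 2 / 2) = q0 ^ (k^2)"
      unfolding q0_def exp_mult_of_nat[symmetric] by (simp add: mult.commute)
    moreover have "cos (2 * pi * real k * (1/2)) = (- 1) ^ k"
      by (simp add: mult.commute)
    ultimately show ?thesis
      by (simp add: gauss_dual_term_def)
  qed
  then have "(\<Sum>k. gauss_dual_term 2 k (1/2)) = jacobi_theta4 q0"
    by (simp add: jacobi_theta4_def)
  ultimately have "2 * odd_square_series q0 = jacobi_theta4 q0 / sqrt 2"
    using poisson_summation_gauss[of 2 "1/2"] by simp
  then show ?thesis
    by (simp add: q0_def field_simps)
qed

lemma theta_nome_inequality:
  fixes q q0 A B :: real
  assumes q: "0 < q" "q < q0" "q0 \<le> 1/4"
    and identity: "jacobi_theta4 q0 ^ 2 = 8 * odd_square_series q0 ^ 2"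
    and A: "0 \<le> A" "A \<le> 2 * q" and B: "0 \<le> B" "B \<le> 2 * q ^ 4"
  shows "16 * ln (q0 / q) * A * B + 8 * odd_square_series q ^ 2 < jacobi_theta4 q ^ 2"
proof -
  have "odd_square_series q ^ 2 \<le> odd_square_series q0 ^ 2"
    using odd_square_series_nonneg odd_square_series_mono q by (intro power_mono) auto
  then have lower: "392/225 * (q0 - q) \<le> jacobi_theta4 q ^ 2 - 8 * odd_square_series q ^ 2"
    using jacobi_theta4_square_diff_ge[of q q0] q identity by linarith
  have "ln (q0 / q) \<le> q0 / q - 1"
    using q by (intro ln_le_minus_one) auto
  also have "\<dots> = (q0 - q) / q"
    using q by (simp add: field_simps)
  finally have "16 * ln (q0 / q) * A * B \<le> 16 * ((q0 - q) / q) * (2 * q) * (2 * q ^ 4)"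
    using q A B by (intro mult_mono) auto
  also have "\<dots> = 64 * q ^ 4 * (q0 - q)"
    using q by (simp add: field_simps)
  also have "\<dots> \<le> 64 * (1/4) ^ 4 * (q0 - q)"
    using q by (intro mult_right_mono mult_left_mono power_mono) auto
  also have "\<dots> = 1/4 * (q0 - q)"
    by (simp add: power_divide)
  finally have upper: "16 * ln (q0 / q) * A * B \<le> 1/4 * (q0 - q)" .
  moreover have "1/4 * (q0 - q) < 392/225 * (q0 - q)"
    using q by simp
  ultimately show ?thesis
    using lower by linarith
qed

theorem lemma6p2:
  fixes x :: real
  assumes "x > 1"
  shows "(8 * complex_of_real pi * complex_of_real (x - 1) * complex_of_real (Psi (x/2)) * complex_of_real (Psi (2*x))
            + 2 * (theta2 0 (2 * \<i> * complex_of_real x))^2)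
          / (theta3 (complex_of_real (pi/2)) (\<i> / 2 * complex_of_real x))^2
        < 2 * (theta2 0 (2 * \<i>))^2 / (theta3 (complex_of_real (pi/2)) (\<i> / 2))^2
     \<and> 2 * (theta2 0 (2 * \<i>))^2 / (theta3 (complex_of_real (pi/2)) (\<i> / 2))^2 = 1"
proof -
  define q where "q = exp (- pi * x / 2)"
  define q0 where "q0 = exp (- pi / 2)"
  have q: "0 < q" "q < q0" "q0 \<le> 1/4"
    using assms exp_neg_pi_half_le by (simp_all add: q_def q0_def)
  have identity: "jacobi_theta4 q0 ^ 2 = 8 * odd_square_series q0 ^ 2"
    unfolding q0_def jacobi_theta4_eq_odd_square_series by (simp add: power_mult_distrib)
  have "exp (- pi * (x/2)) = q" "exp (- pi * (2*x)) = q ^ 4"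
    by (simp_all add: q_def flip: exp_of_nat_mult)
  then have "16 * ln (q0 / q) * Psi (x/2) * Psi (2*x) + 8 * odd_square_series q ^ 2 < jacobi_theta4 q ^ 2"
    using Psi_bounds[of "x/2"] Psi_bounds[of "2*x"] q power_mono[of q "1/4" 4]
    by (intro theta_nome_inequality[OF q identity]) (simp_all add: power_divide)
  moreover have "ln (q0 / q) = pi * (x - 1) / 2"
    by (simp add: q_def q0_def field_simps flip: exp_diff)
  moreover have "jacobi_theta4 q > 0" "jacobi_theta4 q0 > 0"
    using jacobi_theta4_ge[of q] jacobi_theta4_ge[of q0] q by simp_all
  ultimately have real_ineq: "(8 * pi * (x - 1) * Psi (x/2) * Psi (2*x) + 8 * odd_square_series q ^ 2) /
      jacobi_theta4 q ^ 2 < 1"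
    by simp
  have "8 * odd_square_series q0 ^ 2 / jacobi_theta4 q0 ^ 2 = 1"
    using identity[symmetric] \<open>jacobi_theta4 q0 > 0\<close> by simp
  moreover have "2 * (theta2 0 (2 * \<i>))^2 / (theta3 (complex_of_real (pi/2)) (\<i> / 2))^2 =
      complex_of_real (8 * odd_square_series q0 ^ 2 / jacobi_theta4 q0 ^ 2)"
    using theta2_imaginary_axis[of 1] theta3_imaginary_axis[of 1] by (simp add: q0_def power_mult_distrib)
  ultimately have "2 * (theta2 0 (2 * \<i>))^2 / (theta3 (complex_of_real (pi/2)) (\<i> / 2))^2 = 1"
    by (metis of_real_1)
  moreover have "(8 * complex_of_real pi * complex_of_real (x - 1) * complex_of_real (Psi (x/2)) *
      complex_of_real (Psi (2*x)) + 2 * (theta2 0 (2 * \<i> * complex_of_real x))^2) /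
      (theta3 (complex_of_real (pi/2)) (\<i> / 2 * complex_of_real x))^2 =
    complex_of_real ((8 * pi * (x - 1) * Psi (x/2) * Psi (2*x) + 8 * odd_square_series q ^ 2) /
      jacobi_theta4 q ^ 2)"
    using theta2_imaginary_axis[of x] theta3_imaginary_axis[of x] assms
    unfolding q_def[symmetric] by (simp add: power_mult_distrib)
  ultimately show ?thesis
    using real_ineq by (simp add: less_complex_def)
qed

end
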